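(* Let $\mathcal{K}=(\mathcal{T},\mathcal{A})$ be a $\mathcal{SHIQ}$ ontology and let $\mathbf{S}$ be a set of individual names. For each $i\in\mathbf{S}$ let $\mathcal{M}_{\{i\}}\subseteq\mathcal{A}$ be an ABox module for the signature $\{i\}$, and put $\mathcal{M}_{\mathbf{S}}=\bigcup_{i\in\mathbf{S}}\mathcal{M}_{\{i\}}$. Then $\mathcal{M}_{\mathbf{S}}$ is an ABox module for $\mathbf{S}$.
   Context: A $\mathcal{SHIQ}$ ontology $\mathcal{K}=(\mathcal{T},\mathcal{A})$ consists of a TBox $\mathcal{T}$ (role inclusion axioms $R_1\sqsubseteq R_2$, transitivity declarations, and general concept inclusions $C\sqsubseteq D$ between $\mathcal{SHIQ}$ concepts) and an ABox $\mathcal{A}$ (a finite set of assertions $C(a)$, $R(a,b)$, $a\not\approx b$ with $a,b$ individual names and $R$ a role name or the inverse of a role name). Entailment convention: throughout, $\mathcal{K}\models\alpha$ means that $\alpha$ is a justifiable entailment of $\mathcal{K}$, i.e. there is a subset $\mathcal{K}'\subseteq\mathcal{K}$ that is consistent (has a model) and classically entails $\alpha$ (every model of $\mathcal{K}'$ satisfies $\alpha$). For an assertion $\gamma$, $Sig(\gamma)$ is the set of individual names occurring in $\gamma$. ABox module: given a set $\mathbf{S}$ of individual names, a subset $\mathcal{M}_{\mathbf{S}}\subseteq\mathcal{A}$ is an ABox module for $\mathbf{S}$ iff for every assertion $\gamma$ that is either a class assertion $A(a)$ with $A$ an atomic concept name or a property assertion $R(a,b)$ with $R$ a role or inverse role,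 and with $Sig(\gamma)\cap\mathbf{S}\neq\emptyset$, we have $(\mathcal{T},\mathcal{M}_{\mathbf{S}})\models\gamma$ iff $\mathcal{K}\models\gamma$. *)

theory Defs
  imports Main
begin

datatype 'r role = RName 'r | Inv 'r

fun inv_role :: "'r role \<Rightarrow> 'r role" where
  "inv_role (RName r) = Inv r"
| "inv_role (Inv r) = RName r"

datatype ('c, 'r) concept =
    Atomic 'c
  | Top
  | Bot
  | Neg "('c, 'r) concept"
  | Conj "('c, 'r) concept" "('c, 'r) concept"
  | Disj "('c, 'r) concept" "('c, 'r) concept"
  | Ex "'r role" "('c, 'r) concept"
  | All "'r role" "('c, 'r) concept"
  | AtLeast nat "'r role" "('c, 'r) concept"
  | AtMost nat "'r role" "('c, 'r) concept"

datatype ('c, 'r) tbox_axiom =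
    RIA "'r role" "'r role"
  | TransAx "'r role"
  | GCI "('c, 'r) concept" "('c, 'r) concept"

datatype ('c, 'r, 'i) assertion =
    CAssert "('c, 'r) concept" 'i
  | RAssert "'r role" 'i 'i
  | DiffAssert 'i 'i

type_synonym ('c, 'r, 'i) ontology =
  "('c, 'r) tbox_axiom set \<times> ('c, 'r, 'i) assertion set"

fun Sig :: "('c, 'r, 'i) assertion \<Rightarrow> 'i set" where
  "Sig (CAssert C a) = {a}"
| "Sig (RAssert R a b) = {a, b}"
| "Sig (DiffAssert a b) = {a, b}"

definition role_incl :: "('c, 'r) tbox_axiom set \<Rightarrow> ('r role \<times> 'r role) set" where
  "role_incl T = ({(R, S). RIA R S \<in> T} \<union> {(inv_role R, inv_role S) | R S. RIA R S \<in> T})\<^sup>*"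

definition transitive_role :: "('c, 'r) tbox_axiom set \<Rightarrow> 'r role \<Rightarrow> bool" where
  "transitive_role T R \<longleftrightarrow> TransAx R \<in> T \<or> TransAx (inv_role R) \<in> T"

definition simple_role :: "('c, 'r) tbox_axiom set \<Rightarrow> 'r role \<Rightarrow> bool" where
  "simple_role T R \<longleftrightarrow> \<not> (\<exists>S. (S, R) \<in> role_incl T \<and> transitive_role T S)"

fun wf_concept :: "('c, 'r) tbox_axiom set \<Rightarrow> ('c, 'r) concept \<Rightarrow> bool" where
  "wf_concept T (Atomic A) = True"
| "wf_concept T Top = True"
| "wf_concept T Bot = True"
| "wf_concept T (Neg C) = wf_concept T C"
| "wf_concept T (Conj C D) = (wf_concept T C \<and> wf_concept T D)"
| "wf_concept T (Disj C D) = (wf_concept T C \<and> wf_concept T D)"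
| "wf_concept T (Ex R C) = wf_concept T C"
| "wf_concept T (All R C) = wf_concept T C"
| "wf_concept T (AtLeast n R C) = (simple_role T R \<and> wf_concept T C)"
| "wf_concept T (AtMost n R C) = (simple_role T R \<and> wf_concept T C)"

fun wf_tbox_axiom :: "('c, 'r) tbox_axiom set \<Rightarrow> ('c, 'r) tbox_axiom \<Rightarrow> bool" where
  "wf_tbox_axiom T (GCI C D) = (wf_concept T C \<and> wf_concept T D)"
| "wf_tbox_axiom T _ = True"

fun wf_assertion :: "('c, 'r) tbox_axiom set \<Rightarrow> ('c, 'r, 'i) assertion \<Rightarrow> bool" where
  "wf_assertion T (CAssert C a) = wf_concept T C"
| "wf_assertion T _ = True"

definition shiq_ontology :: "('c, 'r, 'i) ontology \<Rightarrow> bool" where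
  "shiq_ontology K \<longleftrightarrow> finite (fst K) \<and> finite (snd K)
     \<and> (\<forall>ax \<in> fst K. wf_tbox_axiom (fst K) ax) \<and> (\<forall>\<alpha> \<in> snd K. wf_assertion (fst K) \<alpha>)"

text \<open>Interpretations over (countable) domains, represented as nonempty subsets of nat.
  No unique name assumption.\<close>

record ('c, 'r, 'i) interp =
  dom :: "nat set"
  cint :: "'c \<Rightarrow> nat set"
  rint :: "'r \<Rightarrow> (nat \<times> nat) set"
  iint :: "'i \<Rightarrow> nat"

definition is_interp :: "('c, 'r, 'i) interp \<Rightarrow> bool" where
  "is_interp I \<longleftrightarrow> dom I \<noteq> {} \<and> (\<forall>A. cint I A \<subseteq> dom I)
     \<and> (\<forall>r. rint I r \<subseteq> dom I \<times> dom I) \<and> (\<forall>a. iint I a \<in> dom I)"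

fun role_ext :: "('c, 'r, 'i) interp \<Rightarrow> 'r role \<Rightarrow> (nat \<times> nat) set" where
  "role_ext I (RName r) = rint I r"
| "role_ext I (Inv r) = (rint I r)\<inverse>"

fun concept_ext :: "('c, 'r, 'i) interp \<Rightarrow> ('c, 'r) concept \<Rightarrow> nat set" where
  "concept_ext I (Atomic A) = cint I A"
| "concept_ext I Top = dom I"
| "concept_ext I Bot = {}"
| "concept_ext I (Neg C) = dom I - concept_ext I C"
| "concept_ext I (Conj C D) = concept_ext I C \<inter> concept_ext I D"
| "concept_ext I (Disj C D) = concept_ext I C \<union> concept_ext I D"
| "concept_ext I (Ex R C) =
     {x \<in> dom I. \<exists>y. (x, y) \<in> role_ext I R \<and> y \<in> concept_ext I C}"
| "concept_ext I (All R C) =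
     {x \<in> dom I. \<forall>y. (x, y) \<in> role_ext I R \<longrightarrow> y \<in> concept_ext I C}"
| "concept_ext I (AtLeast n R C) =
     {x \<in> dom I. \<not> (finite {y. (x, y) \<in> role_ext I R \<and> y \<in> concept_ext I C}
                     \<and> card {y. (x, y) \<in> role_ext I R \<and> y \<in> concept_ext I C} < n)}"
| "concept_ext I (AtMost n R C) =
     {x \<in> dom I. finite {y. (x, y) \<in> role_ext I R \<and> y \<in> concept_ext I C}
                  \<and> card {y. (x, y) \<in> role_ext I R \<and> y \<in> concept_ext I C} \<le> n}"

fun sat_tbox_axiom :: "('c, 'r, 'i) interp \<Rightarrow> ('c, 'r) tbox_axiom \<Rightarrow> bool" where
  "sat_tbox_axiom I (RIA R S) = (role_ext I R \<subseteq> role_ext I S)"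
| "sat_tbox_axiom I (TransAx R) = trans (role_ext I R)"
| "sat_tbox_axiom I (GCI C D) = (concept_ext I C \<subseteq> concept_ext I D)"

fun sat_assertion :: "('c, 'r, 'i) interp \<Rightarrow> ('c, 'r, 'i) assertion \<Rightarrow> bool" where
  "sat_assertion I (CAssert C a) = (iint I a \<in> concept_ext I C)"
| "sat_assertion I (RAssert R a b) = ((iint I a, iint I b) \<in> role_ext I R)"
| "sat_assertion I (DiffAssert a b) = (iint I a \<noteq> iint I b)"

definition is_model :: "('c, 'r, 'i) interp \<Rightarrow> ('c, 'r, 'i) ontology \<Rightarrow> bool" where
  "is_model I K \<longleftrightarrow> is_interp I \<and> (\<forall>ax \<in> fst K. sat_tbox_axiom I ax)
     \<and> (\<forall>\<alpha> \<in> snd K. sat_assertion I \<alpha>)"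

definition consistent :: "('c, 'r, 'i) ontology \<Rightarrow> bool" where
  "consistent K \<longleftrightarrow> (\<exists>I. is_model I K)"

definition classically_entails :: "('c, 'r, 'i) ontology \<Rightarrow> ('c, 'r, 'i) assertion \<Rightarrow> bool" where
  "classically_entails K \<gamma> \<longleftrightarrow> (\<forall>I. is_model I K \<longrightarrow> sat_assertion I \<gamma>)"

text \<open>Justifiable entailment: some consistent sub-ontology classically entails the assertion.\<close>
definition entails :: "('c, 'r, 'i) ontology \<Rightarrow> ('c, 'r, 'i) assertion \<Rightarrow> bool" where
  "entails K \<gamma> \<longleftrightarrow> (\<exists>T' A'. T' \<subseteq> fst K \<and> A' \<subseteq> snd K
      \<and> consistent (T', A') \<and> classically_entails (T', A') \<gamma>)"

fun query_assertion :: "('c, 'r, 'i) assertion \<Rightarrow> bool" where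
  "query_assertion (CAssert C a) = (\<exists>A. C = Atomic A)"
| "query_assertion (RAssert R a b) = True"
| "query_assertion (DiffAssert a b) = False"

definition abox_module ::
  "('c, 'r, 'i) ontology \<Rightarrow> 'i set \<Rightarrow> ('c, 'r, 'i) assertion set \<Rightarrow> bool" where
  "abox_module K S M \<longleftrightarrow> M \<subseteq> snd K \<and>
     (\<forall>\<gamma>. query_assertion \<gamma> \<and> Sig \<gamma> \<inter> S \<noteq> {} \<longrightarrow>
        (entails (fst K, M) \<gamma> \<longleftrightarrow> entails K \<gamma>))"

end

theory Submission
  imports Defs
begin

text \<open>A query mentioning some i \<in> S that K
  entails is already entailed by the module for i, hence by the union; conversely the union is
  contained in the ABox of K.\<close>

lemma entails_mono_abox:
  assumes "entails (T, A) \<gamma>" and "A \<subseteq> A'"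
  shows "entails (T, A') \<gamma>"
proof -
  from assms(1) obtain T' A'' where "T' \<subseteq> T" "A'' \<subseteq> A"
    and "consistent (T', A'')" "classically_entails (T', A'') \<gamma>"
    unfolding entails_def by auto
  moreover from \<open>A'' \<subseteq> A\<close> assms(2) have "A'' \<subseteq> A'" by blast
  ultimately show ?thesis unfolding entails_def by auto
qed

lemma abox_module_UN:
  assumes "\<forall>i \<in> I. abox_module K (S i) (M i)"
  shows "abox_module K (\<Union>i \<in> I. S i) (\<Union>i \<in> I. M i)"
proof -
  have sub: "(\<Union>i \<in> I. M i) \<subseteq> snd K"
    using assms unfolding abox_module_def by blast
  have "entails (fst K, \<Union>i \<in> I. M i) \<gamma> \<longleftrightarrow> entails K \<gamma>"
    if query: "query_assertion \<gamma>" and sig: "Sig \<gamma> \<inter> (\<Union>i \<in> I. S i) \<noteq> {}" for \<gamma>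
  proof
    assume "entails (fst K, \<Union>i \<in> I. M i) \<gamma>"
    from entails_mono_abox[OF this sub] show "entails K \<gamma>" by simp
  next
    assume "entails K \<gamma>"
    obtain i where i: "i \<in> I" "Sig \<gamma> \<inter> S i \<noteq> {}" using sig by blast
    with assms query \<open>entails K \<gamma>\<close> have "entails (fst K, M i) \<gamma>"
      unfolding abox_module_def by blast
    moreover have "M i \<subseteq> (\<Union>i \<in> I. M i)" using i by blast
    ultimately show "entails (fst K, \<Union>i \<in> I. M i) \<gamma>" by (rule entails_mono_abox)
  qed
  with sub show ?thesis unfolding abox_module_def by blast
qed

theorem proposition1:
  fixes K :: "('c, 'r, 'i) ontology"
    and S :: "'i set"
    and M :: "'i \<Rightarrow> ('c, 'r, 'i) assertion set"
  assumes "shiq_ontology K"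
    and "\<forall>i \<in> S. abox_module K {i} (M i)"
  shows "abox_module K S (\<Union>i \<in> S. M i)"
proof -
  have "(\<Union>i \<in> S. {i}) = S" by blast
  with abox_module_UN[of S K "\<lambda>i. {i}" M] assms(2) show ?thesis by simp
qed

end
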